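(* Let $V$ be a simple $\mathcal{R}$-module. If there exist a nonzero vector $v\in V$ and $M\in\mathbb{Z}_+$ such that $L_mv=G_mv=0$ for all $m\geq M$, then $V$ is a smooth module.
   Context: The Ramond algebra $\mathcal{R}=\mathcal{R}_{\bar 0}\oplus\mathcal{R}_{\bar 1}$ is the Lie superalgebra with basis $\{L_m,G_m,c\mid m\in\mathbb{Z}\}$, where $\mathcal{R}_{\bar 0}=\mathrm{span}\{L_m,c\}$, $\mathcal{R}_{\bar 1}=\mathrm{span}\{G_m\}$, and brackets $[L_m,L_n]=(m-n)L_{m+n}+\delta_{m+n,0}\frac{m^3-m}{12}c$, $[L_m,G_n]=(\frac m2-n)G_{m+n}$, $[G_m,G_n]=2L_{m+n}+\frac13\delta_{m+n,0}(m^2-\frac14)c$, $[\mathcal{R},c]=0$. Modules are $\mathbb{Z}_2$-graded (super)modules. For $m\in\mathbb{Z}$ let $\mathcal{R}_m=\mathrm{span}\{L_m,G_m,\delta_{m,0}c\}$. An $\mathcal{R}$-module is smooth if for every vector $u$ there is $n\in\mathbb{N}$ with $\mathcal{R}_mu=0$ for all $m>n$. *)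

theory Defs
  imports Complex_Main
begin

text \<open>V0, V1 are the even/odd parts; L m, G m, C are the
  actions of L_m, G_m and the central element c.\<close>

definition ramond_module ::
  "(complex \<Rightarrow> 'v::ab_group_add \<Rightarrow> 'v) \<Rightarrow> 'v set \<Rightarrow> 'v set \<Rightarrow>
   (int \<Rightarrow> 'v \<Rightarrow> 'v) \<Rightarrow> (int \<Rightarrow> 'v \<Rightarrow> 'v) \<Rightarrow> ('v \<Rightarrow> 'v) \<Rightarrow> bool" where
  "ramond_module sc V0 V1 L G C \<longleftrightarrow>
     vector_space sc \<and>
     (\<forall>m. Vector_Spaces.linear sc sc (L m)) \<and> (\<forall>m. Vector_Spaces.linear sc sc (G m)) \<and> Vector_Spaces.linear sc sc C \<and>
     module.subspace sc V0 \<and> module.subspace sc V1 \<and> V0 \<inter> V1 = {0} \<and>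
     (\<forall>x. \<exists>x0\<in>V0. \<exists>x1\<in>V1. x = x0 + x1) \<and>
     (\<forall>m. L m ` V0 \<subseteq> V0 \<and> L m ` V1 \<subseteq> V1) \<and>
     (\<forall>m. G m ` V0 \<subseteq> V1 \<and> G m ` V1 \<subseteq> V0) \<and>
     C ` V0 \<subseteq> V0 \<and> C ` V1 \<subseteq> V1 \<and>
     (\<forall>m n x. L m (L n x) - L n (L m x) =
        sc (of_int (m - n)) (L (m + n) x) +
        (if m + n = 0 then sc (of_int (m^3 - m) / 12) (C x) else 0)) \<and>
     (\<forall>m n x. L m (G n x) - G n (L m x) =
        sc (of_int m / 2 - of_int n) (G (m + n) x)) \<and>
     (\<forall>m n x. G m (G n x) + G n (G m x) =
        sc 2 (L (m + n) x) +
        (if m + n = 0 then sc ((of_int m ^ 2 - 1/4) / 3) (C x) else 0)) \<and>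
     (\<forall>m x. L m (C x) = C (L m x)) \<and> (\<forall>m x. G m (C x) = C (G m x))"

definition graded_submodule ::
  "(complex \<Rightarrow> 'v::ab_group_add \<Rightarrow> 'v) \<Rightarrow> 'v set \<Rightarrow> 'v set \<Rightarrow>
   (int \<Rightarrow> 'v \<Rightarrow> 'v) \<Rightarrow> (int \<Rightarrow> 'v \<Rightarrow> 'v) \<Rightarrow> ('v \<Rightarrow> 'v) \<Rightarrow> 'v set \<Rightarrow> bool" where
  "graded_submodule sc V0 V1 L G C W \<longleftrightarrow>
     module.subspace sc W \<and>
     (\<forall>m. L m ` W \<subseteq> W) \<and> (\<forall>m. G m ` W \<subseteq> W) \<and> C ` W \<subseteq> W \<and>
     (\<forall>w\<in>W. \<exists>w0\<in>W \<inter> V0. \<exists>w1\<in>W \<inter> V1. w = w0 + w1)"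

definition simple_ramond_module ::
  "(complex \<Rightarrow> 'v::ab_group_add \<Rightarrow> 'v) \<Rightarrow> 'v set \<Rightarrow> 'v set \<Rightarrow>
   (int \<Rightarrow> 'v \<Rightarrow> 'v) \<Rightarrow> (int \<Rightarrow> 'v \<Rightarrow> 'v) \<Rightarrow> ('v \<Rightarrow> 'v) \<Rightarrow> bool" where
  "simple_ramond_module sc V0 V1 L G C \<longleftrightarrow>
     ramond_module sc V0 V1 L G C \<and> (UNIV :: 'v set) \<noteq> {0} \<and>
     (\<forall>W. graded_submodule sc V0 V1 L G C W \<longrightarrow> W = {0} \<or> W = UNIV)"

text \<open>Smooth: every u is killed by R_m = span{L_m, G_m, delta_{m,0} c} for all m > n.\<close>

definition smooth_ramond_module ::
  "(int \<Rightarrow> 'v::ab_group_add \<Rightarrow> 'v) \<Rightarrow> (int \<Rightarrow> 'v \<Rightarrow> 'v) \<Rightarrow> ('v \<Rightarrow> 'v) \<Rightarrow> bool" where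
  "smooth_ramond_module L G C \<longleftrightarrow>
     (\<forall>u. \<exists>n::nat. \<forall>m::int. m > int n \<longrightarrow>
        L m u = 0 \<and> G m u = 0 \<and> (m = 0 \<longrightarrow> C u = 0))"

end

theory Submission
  imports Defs
begin

text \<open>The vectors killed by all \<open>L\<^sub>m, G\<^sub>m\<close> of sufficiently large degree form a
  graded submodule: the bracket relations move a generator of large degree past \<open>L\<^sub>k\<close>
  or \<open>G\<^sub>k\<close> at the cost of another generator of large degree, and since \<open>L\<^sub>m\<close>
  preserves and \<open>G\<^sub>m\<close> swaps the parity, each homogeneous component of such a vector is
  killed as well. By simplicity this submodule, which contains \<open>v \<noteq> 0\<close>, is everything.\<close>

definition smooth_vectors :: "(int \<Rightarrow> 'v::zero \<Rightarrow> 'v) \<Rightarrow> (int \<Rightarrow> 'v \<Rightarrow> 'v) \<Rightarrow> 'v set" where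
  "smooth_vectors L G = {w. \<exists>N. \<forall>m\<ge>N. L m w = 0 \<and> G m w = 0}"

lemma smooth_vectorsI:
  assumes "\<And>m. m \<ge> N \<Longrightarrow> L m w = 0" and "\<And>m. m \<ge> N \<Longrightarrow> G m w = 0"
  shows "w \<in> smooth_vectors L G"
  using assms unfolding smooth_vectors_def by blast

lemma smooth_vectorsE:
  assumes "w \<in> smooth_vectors L G"
  obtains N where "\<And>m. m \<ge> N \<Longrightarrow> L m w = 0" and "\<And>m. m \<ge> N \<Longrightarrow> G m w = 0"
  using assms unfolding smooth_vectors_def by blast

text \<open>The condition on \<open>c\<close> in \<^const>\<open>smooth_ramond_module\<close> is vacuous, as \<open>m > n \<ge> 0\<close>.\<close>

lemma smooth_ramond_module_iff_smooth_vectors_UNIV: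
  "smooth_ramond_module L G C \<longleftrightarrow> smooth_vectors L G = UNIV"
proof
  assume smooth: "smooth_ramond_module L G C"
  have "u \<in> smooth_vectors L G" for u
  proof -
    obtain n :: nat where "\<And>m. m > int n \<Longrightarrow> L m u = 0 \<and> G m u = 0"
      using smooth unfolding smooth_ramond_module_def by blast
    then show ?thesis
      by (intro smooth_vectorsI[where N = "int n + 1"]) simp_all
  qed
  then show "smooth_vectors L G = UNIV"
    by blast
next
  assume all_smooth: "smooth_vectors L G = UNIV"
  show "smooth_ramond_module L G C"
    unfolding smooth_ramond_module_def
  proof
    fix u
    obtain N where "\<And>m. m \<ge> N \<Longrightarrow> L m u = 0" "\<And>m. m \<ge> N \<Longrightarrow> G m u = 0"
      using all_smooth by (metis UNIV_I smooth_vectorsE)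
    then show "\<exists>n::nat. \<forall>m. m > int n \<longrightarrow> L m u = 0 \<and> G m u = 0 \<and> (m = 0 \<longrightarrow> C u = 0)"
      by (intro exI[of _ "nat \<bar>N\<bar>"]) auto
  qed
qed

locale ramond_rep =
  fixes sc :: "complex \<Rightarrow> 'v::ab_group_add \<Rightarrow> 'v"
    and V0 V1 :: "'v set"
    and L G :: "int \<Rightarrow> 'v \<Rightarrow> 'v"
    and C :: "'v \<Rightarrow> 'v"
  assumes ramond_module: "ramond_module sc V0 V1 L G C"
begin

sublocale vector_space sc
  using ramond_module unfolding ramond_module_def by iprover

sublocale vector_space_pair sc sc ..

lemma linear_L: "Vector_Spaces.linear sc sc (L m)"
  and linear_G: "Vector_Spaces.linear sc sc (G m)"
  and linear_C: "Vector_Spaces.linear sc sc C"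
  using ramond_module unfolding ramond_module_def by iprover+

lemmas L_add [simp] = linear_add[OF linear_L]
  and L_scale [simp] = linear_scale[OF linear_L]
  and L_zero [simp] = linear_0[OF linear_L]
  and G_add [simp] = linear_add[OF linear_G]
  and G_scale [simp] = linear_scale[OF linear_G]
  and G_zero [simp] = linear_0[OF linear_G]
  and C_zero [simp] = linear_0[OF linear_C]

lemma L_L_commutator:
  "L m (L n x) - L n (L m x) =
     sc (of_int (m - n)) (L (m + n) x) +
     (if m + n = 0 then sc (of_int (m^3 - m) / 12) (C x) else 0)"
  and L_G_commutator:
  "L m (G n x) - G n (L m x) = sc (of_int m / 2 - of_int n) (G (m + n) x)"
  and G_G_anticommutator:
  "G m (G n x) + G n (G m x) =
     sc 2 (L (m + n) x) +
     (if m + n = 0 then sc ((of_int m ^ 2 - 1/4) / 3) (C x) else 0)"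
  and L_C_commute: "L m (C x) = C (L m x)"
  and G_C_commute: "G m (C x) = C (G m x)"
  using ramond_module unfolding ramond_module_def by iprover+

lemma even_odd_decomposition: "\<exists>x0\<in>V0. \<exists>x1\<in>V1. x = x0 + x1"
  using ramond_module unfolding ramond_module_def by iprover

lemma L_even: "x \<in> V0 \<Longrightarrow> L m x \<in> V0"
  and L_odd: "x \<in> V1 \<Longrightarrow> L m x \<in> V1"
  and G_even: "x \<in> V0 \<Longrightarrow> G m x \<in> V1"
  and G_odd: "x \<in> V1 \<Longrightarrow> G m x \<in> V0"
proof -
  have "L m ` V0 \<subseteq> V0" "L m ` V1 \<subseteq> V1" "G m ` V0 \<subseteq> V1" "G m ` V1 \<subseteq> V0"
    using ramond_module unfolding ramond_module_def by iprover+
  then show "x \<in> V0 \<Longrightarrow> L m x \<in> V0" "x \<in> V1 \<Longrightarrow> L m x \<in> V1"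
    "x \<in> V0 \<Longrightarrow> G m x \<in> V1" "x \<in> V1 \<Longrightarrow> G m x \<in> V0"
    by blast+
qed

lemma even_plus_odd_eq_0:
  assumes "a \<in> V0" and "b \<in> V1" and "a + b = 0"
  shows "a = 0" and "b = 0"
proof -
  have "subspace V0" and "V0 \<inter> V1 = {0}"
    using ramond_module unfolding ramond_module_def by iprover+
  moreover have "b = - a"
    using \<open>a + b = 0\<close> by (simp add: eq_neg_iff_add_eq_0 add.commute)
  ultimately have "b = 0"
    using \<open>a \<in> V0\<close> \<open>b \<in> V1\<close> by (metis IntI singletonD subspace_neg)
  then show "b = 0" and "a = 0"
    using \<open>a + b = 0\<close> by simp_all
qed

lemma subspace_smooth_vectors: "subspace (smooth_vectors L G)"
  unfolding subspace_def
proof (intro conjI ballI allI)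
  show "0 \<in> smooth_vectors L G"
    by (rule smooth_vectorsI) simp_all
next
  fix x y assume "x \<in> smooth_vectors L G" "y \<in> smooth_vectors L G"
  then obtain Nx Ny
    where "\<And>m. m \<ge> Nx \<Longrightarrow> L m x = 0 \<and> G m x = 0"
      and "\<And>m. m \<ge> Ny \<Longrightarrow> L m y = 0 \<and> G m y = 0"
    by (metis smooth_vectorsE)
  then show "x + y \<in> smooth_vectors L G"
    by (intro smooth_vectorsI[where N = "max Nx Ny"]) simp_all
next
  fix c x assume "x \<in> smooth_vectors L G"
  then obtain N where "\<And>m. m \<ge> N \<Longrightarrow> L m x = 0 \<and> G m x = 0"
    by (metis smooth_vectorsE)
  then show "sc c x \<in> smooth_vectors L G"
    by (intro smooth_vectorsI[where N = N]) simp_all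
qed

text \<open>If \<open>L\<^sub>m\<close> and \<open>G\<^sub>m\<close> kill \<open>x\<close> for \<open>m \<ge> N\<close>, then for
  \<open>m \<ge> max N 1 + \<bar>k\<bar>\<close> the (anti)commutators of the generators of degree \<open>m\<close>
  with those of degree \<open>k\<close> involve only generators of degree \<open>m + k \<ge> N\<close>, and never
  the central term, since \<open>m + k \<noteq> 0\<close>.\<close>

lemma smooth_vectors_closed:
  assumes "x \<in> smooth_vectors L G"
  shows "L k x \<in> smooth_vectors L G" and "G k x \<in> smooth_vectors L G"
    and "C x \<in> smooth_vectors L G"
proof -
  obtain N where L_vanish: "\<And>m. m \<ge> N \<Longrightarrow> L m x = 0"
    and G_vanish: "\<And>m. m \<ge> N \<Longrightarrow> G m x = 0"
    using assms by (metis smooth_vectorsE)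
  define N' where "N' = max N 1 + \<bar>k\<bar>"
  have large: "m \<ge> N" "m + k \<ge> N" "k + m \<ge> N" "m + k \<noteq> 0" "k + m \<noteq> 0" if "m \<ge> N'" for m
    using that unfolding N'_def by auto
  show "L k x \<in> smooth_vectors L G"
  proof (rule smooth_vectorsI[where N = N'])
    fix m assume "m \<ge> N'"
    then show "L m (L k x) = 0"
      using L_L_commutator[of m k x] by (simp add: large L_vanish)
    show "G m (L k x) = 0"
      using L_G_commutator[of k m x] \<open>m \<ge> N'\<close> by (simp add: large G_vanish)
  qed
  show "G k x \<in> smooth_vectors L G"
  proof (rule smooth_vectorsI[where N = N'])
    fix m assume "m \<ge> N'"
    then show "L m (G k x) = 0"
      using L_G_commutator[of m k x] by (simp add: large L_vanish G_vanish)
    show "G m (G k x) = 0"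
      using G_G_anticommutator[of m k x] \<open>m \<ge> N'\<close> by (simp add: large L_vanish G_vanish)
  qed
  show "C x \<in> smooth_vectors L G"
    by (rule smooth_vectorsI[where N = N]) (simp_all add: L_C_commute G_C_commute L_vanish G_vanish)
qed

lemma smooth_vectors_homogeneous_parts:
  assumes "x0 + x1 \<in> smooth_vectors L G" and "x0 \<in> V0" and "x1 \<in> V1"
  shows "x0 \<in> smooth_vectors L G" and "x1 \<in> smooth_vectors L G"
proof -
  obtain N where "\<And>m. m \<ge> N \<Longrightarrow> L m (x0 + x1) = 0"
    and "\<And>m. m \<ge> N \<Longrightarrow> G m (x0 + x1) = 0"
    using assms(1) by (metis smooth_vectorsE)
  then have L_vanish: "L m x0 + L m x1 = 0" and G_vanish: "G m x1 + G m x0 = 0" if "m \<ge> N" for m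
    using that by (simp_all add: add.commute)
  have "L m x0 = 0 \<and> L m x1 = 0 \<and> G m x0 = 0 \<and> G m x1 = 0" if "m \<ge> N" for m
    using even_plus_odd_eq_0[OF L_even L_odd L_vanish] even_plus_odd_eq_0[OF G_odd G_even G_vanish]
      assms(2,3) that by blast
  then show "x0 \<in> smooth_vectors L G" and "x1 \<in> smooth_vectors L G"
    by (auto intro: smooth_vectorsI)
qed

lemma graded_submodule_smooth_vectors: "graded_submodule sc V0 V1 L G C (smooth_vectors L G)"
  unfolding graded_submodule_def
proof (intro conjI allI ballI subsetI)
  show "subspace (smooth_vectors L G)"
    by (rule subspace_smooth_vectors)
next
  fix w assume "w \<in> smooth_vectors L G"
  moreover obtain w0 w1 where "w0 \<in> V0" "w1 \<in> V1" "w = w0 + w1"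
    using even_odd_decomposition by blast
  ultimately show "\<exists>w0\<in>smooth_vectors L G \<inter> V0. \<exists>w1\<in>smooth_vectors L G \<inter> V1. w = w0 + w1"
    using smooth_vectors_homogeneous_parts by blast
qed (use smooth_vectors_closed in blast)+

end

lemma simple_ramond_module_smooth_if_smooth_vector:
  assumes "simple_ramond_module sc V0 V1 L G C"
    and "v \<noteq> 0" and "v \<in> smooth_vectors L G"
  shows "smooth_ramond_module L G C"
proof -
  interpret ramond_rep sc V0 V1 L G C
    using assms(1) unfolding simple_ramond_module_def by unfold_locales blast
  have "smooth_vectors L G = UNIV"
    using assms graded_submodule_smooth_vectors unfolding simple_ramond_module_def by blast
  then show ?thesis
    by (simp add: smooth_ramond_module_iff_smooth_vectors_UNIV)
qed

theorem lemma4p2: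
  fixes sc :: "complex \<Rightarrow> 'v::ab_group_add \<Rightarrow> 'v"
    and V0 V1 :: "'v set"
    and L G :: "int \<Rightarrow> 'v \<Rightarrow> 'v"
    and C :: "'v \<Rightarrow> 'v"
  assumes "simple_ramond_module sc V0 V1 L G C"
    and "\<exists>v M. v \<noteq> 0 \<and> M > (0::int) \<and> (\<forall>m\<ge>M. L m v = 0 \<and> G m v = 0)"
  shows "smooth_ramond_module L G C"
proof -
  obtain v M where "v \<noteq> 0" and "\<forall>m\<ge>M. L m v = 0 \<and> G m v = 0"
    using assms(2) by blast
  then have "v \<in> smooth_vectors L G"
    unfolding smooth_vectors_def by blast
  with assms(1) \<open>v \<noteq> 0\<close> show ?thesis
    by (rule simple_ramond_module_smooth_if_smooth_vector)
qed

end
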